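(* Let $R=K[x_1,\dots,x_n]$ and let $s,t,c$ be positive integers with $s\ge 2t$, $2\le c\le n$. Let $I\subset R$ be a homogeneous Gorenstein ideal of codimension $c$ whose graded minimal free resolution has the form $0\to F_c\to F_{c-1}\to\dots\to F_1\to F_0\to R/I\to0$ with $F_0=R$, $F_c=R(-s-c)$, and \[ F_i=R^{a_i}(-t-i)\oplus R^{a_{c-i}}(-s+t-i)\quad(1\le i\le c-1),\qquad a_i=\binom{c+t-1}{i+t}\binom{t-1+i}{t}. \] Then the Boij–Söderberg decomposition of $R/I$ is \[ \beta(R/I)=a\cdot[\pi_{\sigma_1}+\pi_{\sigma_c}]+b\cdot\sum_{j=2}^{c-1}\pi_{\sigma_j}, \] where $a=(s+1-t)\frac{(t+c-1)!}{t!}$, $b=(s+1-2t)\frac{(t+c-1)!}{t!}$, and $\sigma_j=(0,d_{j,1},\dots,d_{j,c-1},s+c)$ with $d_{j,k}=t+k$ for $1\le k\le c-j$ and $d_{j,k}=s-t+k$ for $c-j+1\le k\le c-1$.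
   Context: Betti table $\beta(M)=(\beta_{i,j}(M))$, $\beta_{i,j}(M)=\dim_K[\operatorname{Tor}^R_i(M,K)]_j$. For a strictly increasing sequence $\sigma=(d_0,\dots,d_c)$, the pure diagram $\pi_\sigma$ has entries $\beta_{i,j}=\prod_{l\ne i}\frac1{|d_i-d_l|}$ if $j=d_i$ and $0$ otherwise. The Boij–Söderberg decomposition is the unique expression of the Betti table as a positive integer combination of a chain of pure diagrams $\pi_{\sigma_1}<\dots<\pi_{\sigma_t}$, where $\pi_{(d_0,\dots,d_s)}\le\pi_{(d'_0,\dots,d'_{s'})}$ iff $s\ge s'$ and $d_i\le d'_i$ for $i\le s'$. *)

theory Defs
  imports Complex_Main "HOL-Library.Multiset"
begin

text \<open>Betti tables are functions nat \<Rightarrow> int \<Rightarrow> _ : homological degree i, internal degree j.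
A degree sequence sigma = (d_0,...,d_c) is an int list of length c+1.\<close>

definition pure_diagram :: "int list \<Rightarrow> nat \<Rightarrow> int \<Rightarrow> rat" where
  "pure_diagram \<sigma> i j =
     (if i < length \<sigma> \<and> j = \<sigma> ! i
      then (\<Prod>l \<in> {0..<length \<sigma>} - {i}. 1 / of_int \<bar>\<sigma> ! i - \<sigma> ! l\<bar>)
      else 0)"

definition pd_le :: "int list \<Rightarrow> int list \<Rightarrow> bool" where
  "pd_le \<sigma> \<sigma>' \<longleftrightarrow> length \<sigma>' \<le> length \<sigma> \<and> (\<forall>i < length \<sigma>'. \<sigma> ! i \<le> \<sigma>' ! i)"

definition gor_a :: "nat \<Rightarrow> nat \<Rightarrow> nat \<Rightarrow> nat" where
  "gor_a c t i = ((c + t - 1) choose (i + t)) * ((t - 1 + i) choose t)"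

definition gor_sigma :: "nat \<Rightarrow> nat \<Rightarrow> nat \<Rightarrow> nat \<Rightarrow> int list" where
  "gor_sigma s t c j =
     [0] @ map (\<lambda>k. if k \<le> c - j then int t + int k else int s - int t + int k) [1..<c]
         @ [int s + int c]"

end

theory Submission
  imports Defs
begin

text \<open>Write \<open>s = 2t + u\<close>. Apart from \<open>0\<close> and \<open>s + c\<close>, every \<open>\<sigma>\<^sub>k\<close> consists of two runs of
consecutive integers, \<open>t + l\<close> for \<open>l \<le> c - k\<close> and \<open>t + u + l\<close> for \<open>c - k < l < c\<close>, so each
nonzero entry of \<open>\<pi>\<^sub>\<sigma>\<^sub>k\<close> is a quotient of factorials. In a fixed row only the \<open>\<sigma>\<^sub>k\<close> with the
right degree contribute; indexed by the distance \<open>m\<close> of their jump from the row, the weighted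
contributions become sums \<open>\<Sum>m. w m * (u+m)!/m!\<close> (rows \<open>0 < i < c\<close>) or
\<open>\<Sum>m. w m * (t+u+m)!/(t+m)!\<close> (rows \<open>0\<close> and \<open>c\<close>), which the hockey-stick identity evaluates to
\<open>a\<^sub>i\<close>, \<open>a\<^bsub>c-i\<^esub>\<close> and \<open>1\<close>.\<close>

section \<open>Products and sums of factorial quotients\<close>

lemma prod_ascending_run:
  assumes "x < a" "a \<le> b"
  shows "(\<Prod>l\<in>{a..<b}. of_nat (w + l - x) :: 'a::field_char_0) = fact (w + b - Suc x) / fact (w + a - Suc x)"
  using assms(2)
proof (induction b rule: nat_induct_at_least)
  case (Suc b)
  have "w + Suc b - Suc x = Suc (w + b - Suc x)" "Suc (w + b - Suc x) = w + b - x"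
    using Suc.hyps assms(1) by simp_all
  then have "fact (w + Suc b - Suc x) = (of_nat (w + b - x) :: 'a) * fact (w + b - Suc x)"
    by (metis fact_Suc)
  then show ?case using Suc by (simp add: prod.atLeastLessThan_Suc del: of_nat_diff)
qed simp

lemma prod_descending_run:
  assumes "a \<le> b" "b \<le> y"
  shows "(\<Prod>l\<in>{a..<b}. of_nat (w + y - l) :: 'a::field_char_0) = fact (w + y - a) / fact (w + y - b)"
  using assms
proof (induction b rule: nat_induct_at_least)
  case (Suc b)
  have "w + y - b = Suc (w + y - Suc b)"
    using Suc.prems by simp
  then have "fact (w + y - b) = (of_nat (w + y - b) :: 'a) * fact (w + y - Suc b)"
    by (metis fact_Suc)
  then show ?case using Suc by (simp add: prod.atLeastLessThan_Suc del: of_nat_diff)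
qed simp

lemma prod_abs_ascending_run:
  assumes "x < a" "a \<le> b" and "\<And>l. a \<le> l \<Longrightarrow> l < b \<Longrightarrow> \<bar>f l\<bar> = int (w + l - x)"
  shows "(\<Prod>l\<in>{a..<b}. of_int \<bar>f l\<bar> :: 'a::field_char_0) = fact (w + b - Suc x) / fact (w + a - Suc x)"
proof -
  have "(\<Prod>l\<in>{a..<b}. of_int \<bar>f l\<bar> :: 'a) = (\<Prod>l\<in>{a..<b}. of_nat (w + l - x))"
    by (rule prod.cong) (simp_all add: assms(3))
  then show ?thesis using prod_ascending_run[OF assms(1,2)] by simp
qed

lemma prod_abs_descending_run:
  assumes "a \<le> b" "b \<le> y" and "\<And>l. a \<le> l \<Longrightarrow> l < b \<Longrightarrow> \<bar>f l\<bar> = int (w + y - l)"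
  shows "(\<Prod>l\<in>{a..<b}. of_int \<bar>f l\<bar> :: 'a::field_char_0) = fact (w + y - a) / fact (w + y - b)"
proof -
  have "(\<Prod>l\<in>{a..<b}. of_int \<bar>f l\<bar> :: 'a) = (\<Prod>l\<in>{a..<b}. of_nat (w + y - l))"
    by (rule prod.cong) (simp_all add: assms(3))
  then show ?thesis using prod_descending_run[OF assms(1,2)] by simp
qed

lemma prod_atLeastLessThan_remove:
  assumes "i < n"
  shows "prod g ({0..<n} - {i}) = prod g {0..<i} * prod g {Suc i..<n}"
proof -
  have "{0..<n} - {i} = {0..<i} \<union> {Suc i..<n}" using assms by auto
  then show ?thesis by (simp add: prod.union_disjoint)
qed

lemma sum_atLeast1_atMost_reflect:
  "1 \<le> (c::nat) \<Longrightarrow> (\<Sum>k=1..c. g k) = (\<Sum>m=0..c - 1. g (c - m))"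
  by (rule sum.reindex_bij_witness[where i = "\<lambda>m. c - m" and j = "\<lambda>k. c - k"]) auto

lemma sum_if_last:
  fixes f :: "nat \<Rightarrow> 'a::comm_ring"
  shows "(\<Sum>m=0..q. (if m = q then A else B) * f m) = B * (\<Sum>m=0..q. f m) + (A - B) * f q"
proof -
  have "(\<Sum>m=0..q. (if m = q then A else B) * f m) = (\<Sum>m=0..q. B * f m + (if m = q then (A - B) * f m else 0))"
    by (rule sum.cong) (auto simp: algebra_simps)
  then show ?thesis by (simp add: sum.distrib sum_distrib_left)
qed

lemma sum_if_ends:
  fixes f :: "nat \<Rightarrow> 'a::comm_ring"
  assumes "0 < q"
  shows "(\<Sum>m=0..q. (if m = 0 \<or> m = q then A else B) * f m) = B * (\<Sum>m=0..q. f m) + (A - B) * (f 0 + f q)"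
proof -
  have "(\<Sum>m=0..q. (if m = 0 \<or> m = q then A else B) * f m) =
      (\<Sum>m=0..q. B * f m + ((if m = 0 then (A - B) * f m else 0) + (if m = q then (A - B) * f m else 0)))"
    by (rule sum.cong) (use assms in \<open>auto simp: algebra_simps\<close>)
  then show ?thesis by (simp add: sum.distrib sum_distrib_left algebra_simps)
qed

text \<open>The hockey-stick identity \<open>(\<Sum>k=a..b. (u+k choose k)) = (u+b+1 choose b) - (u+a choose a-1)\<close>,
multiplied by \<open>u!\<close>.\<close>

lemma sum_fact_quotient:
  assumes "a \<le> b"
  shows "(of_nat u + 1) * (\<Sum>k=a..b. fact (u + k) / fact k :: 'a::field_char_0) =
    of_nat (u + b + 1) * (fact (u + b) / fact b) - of_nat a * (fact (u + a) / fact a)"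
  using assms
proof (induction b rule: nat_induct_at_least)
  case base
  then show ?case by (simp add: field_simps)
next
  case (Suc b)
  define g where "g k = (fact (u + k) / fact k :: 'a)" for k
  have step: "of_nat (u + b + 1) * g b = of_nat (Suc b) * g (Suc b)"
    by (simp add: g_def fact_Suc del: of_nat_Suc)
  have "(of_nat u + 1) * (\<Sum>k=a..Suc b. g k) = (of_nat u + 1) * (\<Sum>k=a..b. g k) + (of_nat u + 1) * g (Suc b)"
    using Suc.hyps by (simp add: sum.cl_ivl_Suc algebra_simps)
  also have "\<dots> = of_nat (Suc b) * g (Suc b) + (of_nat u + 1) * g (Suc b) - of_nat a * g a"
    using Suc.IH step by (simp add: g_def)
  also have "\<dots> = of_nat (u + Suc b + 1) * g (Suc b) - of_nat a * g a"
    by (simp add: algebra_simps)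
  finally show ?case by (simp only: g_def)
qed

lemma weighted_run_sum:
  "(\<Sum>m=0..q. (if m = q then of_nat (u + t + 1) else of_nat (u + 1)) * K *
      (fact (u + m) / fact m * (1 / (P * fact (u + q) * of_nat (t + u + q + 1))))) = K / (P * fact q :: 'a::field_char_0)"
proof -
  define f where "f m = (fact (u + m) / fact m :: 'a)" for m
  define D where "D = 1 / (P * fact (u + q) * of_nat (t + u + q + 1) :: 'a)"
  have "(\<Sum>m=0..q. (if m = q then of_nat (u + t + 1) else of_nat (u + 1)) * f m) =
      (of_nat u + 1) * (\<Sum>m=0..q. f m) + of_nat t * f q"
    by (simp add: sum_if_last)
  also have "\<dots> = of_nat (t + u + q + 1) * (fact (u + q) / fact q)"
    using sum_fact_quotient[of 0 q u] by (simp add: f_def field_simps)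
  finally have "(\<Sum>m=0..q. (if m = q then of_nat (u + t + 1) else of_nat (u + 1)) * K * (f m * D)) =
      K * D * (of_nat (t + u + q + 1) * (fact (u + q) / fact q))"
    by (simp add: sum_distrib_left[symmetric] ac_simps)
  also have "\<dots> = K / (P * fact q)"
  proof -
    define N where "N = (of_nat (t + u + q + 1) :: 'a)"
    have "N \<noteq> 0" unfolding N_def of_nat_eq_0_iff by simp
    then show ?thesis unfolding D_def N_def[symmetric] by (cases "P = 0") (simp_all add: field_simps)
  qed
  finally show ?thesis by (simp only: f_def D_def)
qed

lemma weighted_edge_sum:
  assumes "0 < q"
  shows "(\<Sum>m=0..q. (if m = 0 \<or> m = q then of_nat (u + t + 1) else of_nat (u + 1)) * (fact (t + q) / fact t) *
      (fact (t + u + m) / fact (t + m) * (fact t / (fact (t + u + q) * of_nat (2 * t + u + q + 1))))) = (1 :: 'a::field_char_0)"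
proof -
  define f where "f m = (fact (t + u + m) / fact (t + m) :: 'a)" for m
  define N where "N = (of_nat (2 * t + u + q + 1) :: 'a)"
  have "(\<Sum>m=0..q. f m) = (\<Sum>k=t..t + q. fact (u + k) / fact k)"
    using sum.shift_bounds_cl_nat_ivl[of "\<lambda>k. fact (u + k) / fact k :: 'a" 0 t q]
    by (simp add: f_def ac_simps)
  then have "(of_nat u + 1) * (\<Sum>m=0..q. f m) = of_nat (u + t + q + 1) * f q - of_nat t * f 0"
    using sum_fact_quotient[of t "t + q" u] by (simp add: f_def ac_simps)
  then have weighted: "(\<Sum>m=0..q. (if m = 0 \<or> m = q then of_nat (u + t + 1) else of_nat (u + 1)) * f m) = N * f q"
    unfolding sum_if_ends[OF assms] by (simp add: N_def algebra_simps)
  have "(\<Sum>m=0..q. (if m = 0 \<or> m = q then of_nat (u + t + 1) else of_nat (u + 1)) * (fact (t + q) / fact t) *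
      (f m * (fact t / (fact (t + u + q) * N)))) =
      (\<Sum>m=0..q. (if m = 0 \<or> m = q then of_nat (u + t + 1) else of_nat (u + 1)) * f m) *
      (fact (t + q) / fact t * (fact t / (fact (t + u + q) * N)))"
    unfolding sum_distrib_right by (rule sum.cong) (simp_all only: mult_ac)
  also have "\<dots> = N * f q * (fact (t + q) / fact t * (fact t / (fact (t + u + q) * N)))"
    by (simp only: weighted)
  also have "\<dots> = 1"
  proof -
    have "N \<noteq> 0" unfolding N_def of_nat_eq_0_iff by simp
    then show ?thesis by (simp add: f_def)
  qed
  finally show ?thesis by (simp only: f_def N_def)
qed

section \<open>The pure diagrams of the degree sequences\<close>

lemma pure_diagram_off_degree: "j \<noteq> \<sigma> ! i \<Longrightarrow> pure_diagram \<sigma> i j = 0"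
  by (simp add: pure_diagram_def)

lemma pure_diagram_beyond_length: "length \<sigma> \<le> i \<Longrightarrow> pure_diagram \<sigma> i j = 0"
  by (simp add: pure_diagram_def)

lemma pure_diagram_at_degree:
  "i < length \<sigma> \<Longrightarrow>
     pure_diagram \<sigma> i (\<sigma> ! i) = 1 / (\<Prod>l\<in>{0..<length \<sigma>} - {i}. of_int \<bar>\<sigma> ! i - \<sigma> ! l\<bar>)"
  by (simp add: pure_diagram_def prod_dividef)

lemma length_gor_sigma: "0 < c \<Longrightarrow> length (gor_sigma s t c k) = Suc c"
  by (simp add: gor_sigma_def)

lemma gor_sigma_nth:
  assumes "s = 2 * t + u" "l \<le> c" "0 < c"
  shows "gor_sigma s t c k ! l = (if l = 0 then 0 else if l = c then int (2 * t + u + c)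
          else if l \<le> c - k then int (t + l) else int (t + u + l))"
proof -
  consider "l = 0" | "l = c" | m where "l = Suc m" "m < c - 1"
    using assms by (cases l) (auto, arith)
  then show ?thesis
    by cases (use assms in \<open>auto simp: gor_sigma_def nth_append\<close>)
qed

lemma gor_sigma_chain:
  assumes "2 * t \<le> s" "1 \<le> k" "k < c"
  shows "pd_le (gor_sigma s t c k) (gor_sigma s t c (Suc k))"
proof -
  obtain u where "s = 2 * t + u" using assms(1) le_Suc_ex by blast
  then show ?thesis
    unfolding pd_le_def using assms by (auto simp: length_gor_sigma gor_sigma_nth less_Suc_eq_le)
qed

lemma gor_sigma_strict:
  assumes "2 * t < s" "1 \<le> k" "k < c"
  shows "gor_sigma s t c k \<noteq> gor_sigma s t c (Suc k)"
proof
  obtain u where s: "s = 2 * t + u" using assms(1) le_Suc_ex less_imp_le by blast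
  assume "gor_sigma s t c k = gor_sigma s t c (Suc k)"
  then have "gor_sigma s t c k ! (c - k) = gor_sigma s t c (Suc k) ! (c - k)" by simp
  moreover have "c - k \<noteq> 0" "c - k \<noteq> c" "\<not> c - k \<le> c - Suc k" using assms by auto
  ultimately show False using assms by (simp add: s gor_sigma_nth)
qed

lemma pure_diagram_gor_sigma_at_degree:
  assumes "gor_sigma s t c k ! i = d" "i \<le> c" "0 < c"
  shows "pure_diagram (gor_sigma s t c k) i d =
    1 / (\<Prod>l\<in>{0..<Suc c} - {i}. of_int \<bar>d - gor_sigma s t c k ! l\<bar>)"
  using pure_diagram_at_degree[of i "gor_sigma s t c k"] assms by (simp add: length_gor_sigma)

text \<open>The nonzero entries of the \<open>\<pi>\<^sub>\<sigma>\<^sub>k\<close>, each family indexed by the offset \<open>m\<close> of the jump of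
\<open>\<sigma>\<^sub>k\<close> used to sum it below.\<close>

lemma pure_diagram_gor_sigma_first:
  assumes "s = 2 * t + u" "m < c"
  shows "pure_diagram (gor_sigma s t c (c - m)) 0 0 =
    fact (t + u + m) / fact (t + m) * (fact t / (fact (t + u + (c - 1)) * of_nat (2 * t + u + (c - 1) + 1)))"
proof -
  define E where "E = (!) (gor_sigma s t c (c - m))"
  have E: "E l = (if l = 0 then 0 else if l = c then int (2 * t + u + c)
      else if l \<le> m then int (t + l) else int (t + u + l))" if "l \<le> c" for l
    using that assms unfolding E_def by (simp add: gor_sigma_nth)
  define g where "g l = (of_int \<bar>0 - E l\<bar> :: rat)" for l
  have "prod g ({0..<Suc c} - {0}) = prod g {0..<0} * prod g {Suc 0..<Suc c}"
    using assms by (simp only: prod_atLeastLessThan_remove zero_less_Suc)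
  also have "prod g {Suc 0..<Suc c} = prod g {1..<Suc m} * prod g {Suc m..<c} * prod g {c..<Suc c}"
  proof -
    have "Suc 0 \<le> Suc m" "Suc m \<le> c" "Suc 0 \<le> c" "c \<le> Suc c" using assms by simp_all
    then show ?thesis by (simp only: prod.atLeastLessThan_concat One_nat_def)
  qed
  also have "prod g {1..<Suc m} = fact (t + Suc m - Suc 0) / fact (t + 1 - Suc 0)"
    unfolding g_def by (rule prod_abs_ascending_run) (use assms in \<open>auto simp: E\<close>)
  also have "prod g {Suc m..<c} = fact (t + u + c - Suc 0) / fact (t + u + Suc m - Suc 0)"
    unfolding g_def by (rule prod_abs_ascending_run) (use assms in \<open>auto simp: E\<close>)
  also have "prod g {c..<Suc c} = of_nat (2 * t + u + (c - 1) + 1)"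
    using assms by (simp add: g_def E)
  finally have prod_eq: "prod g ({0..<Suc c} - {0}) = fact (t + m) / fact t * (fact (t + u + (c - 1)) / fact (t + u + m)) *
      of_nat (2 * t + u + (c - 1) + 1)"
    using assms by simp
  have pd: "pure_diagram (gor_sigma s t c (c - m)) 0 0 = 1 / prod g ({0..<Suc c} - {0})"
    unfolding g_def E_def by (rule pure_diagram_gor_sigma_at_degree) (use assms in \<open>simp_all add: gor_sigma_nth\<close>)
  show ?thesis unfolding pd prod_eq by (simp add: ac_simps)
qed

lemma pure_diagram_gor_sigma_last:
  assumes "s = 2 * t + u" "m < c"
  shows "pure_diagram (gor_sigma s t c (Suc m)) c (int (2 * t + u + c)) =
    fact (t + u + m) / fact (t + m) * (fact t / (fact (t + u + (c - 1)) * of_nat (2 * t + u + (c - 1) + 1)))"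
proof -
  define n where "n = c - Suc m"
  define E where "E = (!) (gor_sigma s t c (Suc m))"
  have E: "E l = (if l = 0 then 0 else if l = c then int (2 * t + u + c)
      else if l \<le> n then int (t + l) else int (t + u + l))" if "l \<le> c" for l
    using that assms unfolding E_def by (simp add: gor_sigma_nth n_def)
  define g where "g l = (of_int \<bar>int (2 * t + u + c) - E l\<bar> :: rat)" for l
  have "prod g ({0..<Suc c} - {c}) = prod g {0..<c} * prod g {Suc c..<Suc c}"
    using assms by (simp only: prod_atLeastLessThan_remove lessI)
  also have "prod g {0..<c} = prod g {0..<1} * prod g {1..<Suc n} * prod g {Suc n..<c}"
  proof -
    have "(0::nat) \<le> 1" "1 \<le> Suc n" "0 \<le> Suc n" "Suc n \<le> c" using assms by (simp_all add: n_def)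
    then show ?thesis by (simp only: prod.atLeastLessThan_concat)
  qed
  also have "prod g {0..<1} = of_nat (2 * t + u + (c - 1) + 1)"
    using assms by (simp add: g_def E)
  also have "prod g {1..<Suc n} = fact (t + u + c - 1) / fact (t + u + c - Suc n)"
    unfolding g_def by (rule prod_abs_descending_run) (use assms in \<open>auto simp: E n_def\<close>)
  also have "prod g {Suc n..<c} = fact (t + c - Suc n) / fact (t + c - c)"
    unfolding g_def by (rule prod_abs_descending_run) (use assms in \<open>auto simp: E n_def\<close>)
  finally have prod_eq: "prod g ({0..<Suc c} - {c}) = of_nat (2 * t + u + (c - 1) + 1) *
      (fact (t + u + (c - 1)) / fact (t + u + m)) * (fact (t + m) / fact t)"
    using assms by (simp add: n_def ac_simps)
  have pd: "pure_diagram (gor_sigma s t c (Suc m)) c (int (2 * t + u + c)) = 1 / prod g ({0..<Suc c} - {c})"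
    unfolding g_def E_def by (rule pure_diagram_gor_sigma_at_degree) (use assms in \<open>simp_all add: gor_sigma_nth\<close>)
  show ?thesis unfolding pd prod_eq by simp
qed

lemma pure_diagram_gor_sigma_low:
  assumes "s = 2 * t + u" "1 \<le> i" "i + m < c"
  shows "pure_diagram (gor_sigma s t c (c - i - m)) i (int (t + i)) =
    fact (u + m) / fact m * (1 / (of_nat (t + i) * fact (i - 1) * fact (u + (c - i - 1)) * of_nat (t + u + (c - i - 1) + 1)))"
proof -
  define E where "E = (!) (gor_sigma s t c (c - i - m))"
  have E: "E l = (if l = 0 then 0 else if l = c then int (2 * t + u + c)
      else if l \<le> i + m then int (t + l) else int (t + u + l))" if "l \<le> c" for l
    using that assms unfolding E_def by (simp add: gor_sigma_nth)
  define g where "g l = (of_int \<bar>int (t + i) - E l\<bar> :: rat)" for l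
  have "prod g ({0..<Suc c} - {i}) = prod g {0..<i} * prod g {Suc i..<Suc c}"
    using assms by (simp add: prod_atLeastLessThan_remove)
  also have "prod g {0..<i} = prod g {0..<1} * prod g {1..<i}"
    using assms by (simp only: prod.atLeastLessThan_concat)
  also have "prod g {Suc i..<Suc c} = prod g {Suc i..<Suc (i + m)} * prod g {Suc (i + m)..<c} * prod g {c..<Suc c}"
  proof -
    have "Suc i \<le> Suc (i + m)" "Suc (i + m) \<le> c" "Suc i \<le> c" "c \<le> Suc c" using assms by simp_all
    then show ?thesis by (simp only: prod.atLeastLessThan_concat)
  qed
  also have "prod g {0..<1} = of_nat (t + i)"
    using assms by (simp add: g_def E)
  also have "prod g {1..<i} = fact (0 + i - 1) / fact (0 + i - i)"
    unfolding g_def by (rule prod_abs_descending_run) (use assms in \<open>auto simp: E\<close>)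
  also have "prod g {Suc i..<Suc (i + m)} = fact (0 + Suc (i + m) - Suc i) / fact (0 + Suc i - Suc i)"
    unfolding g_def by (rule prod_abs_ascending_run) (use assms in \<open>auto simp: E\<close>)
  also have "prod g {Suc (i + m)..<c} = fact (u + c - Suc i) / fact (u + Suc (i + m) - Suc i)"
    unfolding g_def by (rule prod_abs_ascending_run) (use assms in \<open>auto simp: E\<close>)
  also have "prod g {c..<Suc c} = of_nat (t + u + (c - i - 1) + 1)"
    using assms by (simp add: g_def E)
  finally have prod_eq: "prod g ({0..<Suc c} - {i}) = of_nat (t + i) * fact (i - 1) * (fact m *
      (fact (u + (c - i - 1)) / fact (u + m)) * of_nat (t + u + (c - i - 1) + 1))"
    using assms by (simp add: Suc_diff_Suc)
  have pd: "pure_diagram (gor_sigma s t c (c - i - m)) i (int (t + i)) = 1 / prod g ({0..<Suc c} - {i})"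
    unfolding g_def E_def by (rule pure_diagram_gor_sigma_at_degree) (use assms in \<open>simp_all add: gor_sigma_nth\<close>)
  show ?thesis unfolding pd prod_eq by simp
qed

lemma pure_diagram_gor_sigma_high:
  assumes "s = 2 * t + u" "m < i" "i < c"
  shows "pure_diagram (gor_sigma s t c (m + Suc (c - i))) i (int (t + u + i)) =
    fact (u + m) / fact m * (1 / (fact (c - i - 1) * of_nat (t + c - i) * fact (u + (i - 1)) * of_nat (t + u + (i - 1) + 1)))"
proof -
  define n where "n = i - Suc m"
  have n: "c - (m + Suc (c - i)) = n" "Suc n \<le> i" using assms by (simp_all add: n_def)
  define E where "E = (!) (gor_sigma s t c (m + Suc (c - i)))"
  have E: "E l = (if l = 0 then 0 else if l = c then int (2 * t + u + c)
      else if l \<le> n then int (t + l) else int (t + u + l))" if "l \<le> c" for l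
    using that assms unfolding E_def by (simp add: gor_sigma_nth n_def)
  define g where "g l = (of_int \<bar>int (t + u + i) - E l\<bar> :: rat)" for l
  have "prod g ({0..<Suc c} - {i}) = prod g {0..<i} * prod g {Suc i..<Suc c}"
    using assms by (simp add: prod_atLeastLessThan_remove)
  also have "prod g {0..<i} = prod g {0..<1} * prod g {1..<Suc n} * prod g {Suc n..<i}"
  proof -
    have "(0::nat) \<le> 1" "1 \<le> Suc n" "0 \<le> Suc n" "Suc n \<le> i" using n by simp_all
    then show ?thesis by (simp only: prod.atLeastLessThan_concat)
  qed
  also have "prod g {Suc i..<Suc c} = prod g {Suc i..<c} * prod g {c..<Suc c}"
    using assms by (simp only: prod.atLeastLessThan_concat Suc_leI le_SucI order.refl)
  also have "prod g {0..<1} = of_nat (t + u + i)"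
    using assms by (simp add: g_def E)
  also have "prod g {1..<Suc n} = fact (u + i - 1) / fact (u + i - Suc n)"
    unfolding g_def by (rule prod_abs_descending_run) (use assms n in \<open>auto simp: E\<close>)
  also have "prod g {Suc n..<i} = fact (0 + i - Suc n) / fact (0 + i - i)"
    unfolding g_def by (rule prod_abs_descending_run) (use assms n in \<open>auto simp: E\<close>)
  also have "prod g {Suc i..<c} = fact (0 + c - Suc i) / fact (0 + Suc i - Suc i)"
    unfolding g_def by (rule prod_abs_ascending_run) (use assms n in \<open>auto simp: E\<close>)
  also have "prod g {c..<Suc c} = of_nat (t + c - i)"
    using assms by (simp add: g_def E)
  finally have prod_eq: "prod g ({0..<Suc c} - {i}) = of_nat (t + u + (i - 1) + 1) * (fact (u + (i - 1)) / fact (u + m)) * fact m *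
      (fact (c - i - 1) * of_nat (t + c - i))"
    using assms by (simp add: n_def Suc_diff_Suc)
  have pd: "pure_diagram (gor_sigma s t c (m + Suc (c - i))) i (int (t + u + i)) = 1 / prod g ({0..<Suc c} - {i})"
    unfolding g_def E_def by (rule pure_diagram_gor_sigma_at_degree) (use assms n in \<open>simp_all add: gor_sigma_nth\<close>)
  show ?thesis unfolding pd prod_eq by simp
qed

lemma gor_a_eq:
  assumes "1 \<le> i" "i < c" "0 < t"
  shows "(of_nat (gor_a c t i) :: rat) = fact (t + c - 1) / fact t / (of_nat (t + i) * fact (i - 1) * fact (c - i - 1))"
proof -
  have "(of_nat (gor_a c t i) :: rat) = of_nat ((c + t - 1) choose (i + t)) * of_nat ((t - 1 + i) choose t)"
    by (simp add: gor_a_def)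
  also have "\<dots> = fact (t + c - 1) / (fact (i + t) * fact (c - i - 1)) * (fact (t - 1 + i) / (fact t * fact (i - 1)))"
    using binomial_fact[of "i + t" "c + t - 1", where 'a = rat] binomial_fact[of t "t - 1 + i", where 'a = rat] assms
    by (simp add: add.commute)
  also have "(fact (i + t) :: rat) = of_nat (t + i) * fact (t - 1 + i)"
    using fact_Suc[of "t - 1 + i"] assms by (simp add: add.commute)
  finally show ?thesis by simp
qed

text \<open>For \<open>s = 2t + u\<close> these are the coefficients \<open>a\<close> (of \<open>\<sigma>\<^sub>1\<close> and \<open>\<sigma>\<^sub>c\<close>) and \<open>b\<close> of the theorem.\<close>

definition gor_weight :: "nat \<Rightarrow> nat \<Rightarrow> nat \<Rightarrow> nat \<Rightarrow> rat" where
  "gor_weight t u c k =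
     (if k = 1 \<or> k = c then of_nat (u + t + 1) else of_nat (u + 1)) * (fact (t + c - 1) / fact t)"

lemma sum_gor_weight:
  assumes "2 \<le> c"
  shows "(\<Sum>k=1..c. gor_weight t u c k * f k) =
    of_nat (u + t + 1) * (fact (t + c - 1) / fact t) * (f 1 + f c) +
    of_nat (u + 1) * (fact (t + c - 1) / fact t) * (\<Sum>k=2..c - 1. f k)"
proof -
  have split: "(\<Sum>k=1..c. g k) = g 1 + g c + (\<Sum>k=2..c - 1. g k)" for g :: "nat \<Rightarrow> rat"
  proof -
    have "{1..c} = insert 1 (insert c {2..c - 1})" using assms by auto
    then show ?thesis using assms by (simp add: add.assoc)
  qed
  have "(\<Sum>k=2..c - 1. gor_weight t u c k * f k) = (\<Sum>k=2..c - 1. of_nat (u + 1) * (fact (t + c - 1) / fact t) * f k)"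
    by (rule sum.cong) (auto simp: gor_weight_def)
  also have "\<dots> = of_nat (u + 1) * (fact (t + c - 1) / fact t) * (\<Sum>k=2..c - 1. f k)"
    by (simp only: sum_distrib_left)
  finally have middle: "(\<Sum>k=2..c - 1. gor_weight t u c k * f k) =
      of_nat (u + 1) * (fact (t + c - 1) / fact t) * (\<Sum>k=2..c - 1. f k)" .
  show ?thesis
    unfolding split middle by (simp add: gor_weight_def field_simps)
qed

lemma gor_row_first:
  assumes "s = 2 * t + u" "2 \<le> c"
  shows "(\<Sum>k=1..c. gor_weight t u c k * pure_diagram (gor_sigma s t c k) 0 0) = 1"
proof -
  have "(\<Sum>k=1..c. gor_weight t u c k * pure_diagram (gor_sigma s t c k) 0 0) =
      (\<Sum>m=0..c - 1. gor_weight t u c (c - m) * pure_diagram (gor_sigma s t c (c - m)) 0 0)"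
    by (rule sum_atLeast1_atMost_reflect) (use assms in simp)
  also have "\<dots> = (\<Sum>m=0..c - 1. (if m = 0 \<or> m = c - 1 then of_nat (u + t + 1) else of_nat (u + 1)) *
      (fact (t + (c - 1)) / fact t) * (fact (t + u + m) / fact (t + m) *
      (fact t / (fact (t + u + (c - 1)) * of_nat (2 * t + u + (c - 1) + 1)))))"
    by (intro sum.cong refl, subst pure_diagram_gor_sigma_first[OF assms(1)]) (use assms in \<open>auto simp: gor_weight_def\<close>)
  also have "\<dots> = 1"
    using assms by (intro weighted_edge_sum) simp
  finally show ?thesis .
qed

lemma gor_row_last:
  assumes "s = 2 * t + u" "2 \<le> c"
  shows "(\<Sum>k=1..c. gor_weight t u c k * pure_diagram (gor_sigma s t c k) c (int (2 * t + u + c))) = 1"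
proof -
  have "{1..c} = {Suc 0..Suc (c - 1)}" using assms by auto
  then have "(\<Sum>k=1..c. gor_weight t u c k * pure_diagram (gor_sigma s t c k) c (int (2 * t + u + c))) =
      (\<Sum>m=0..c - 1. gor_weight t u c (Suc m) * pure_diagram (gor_sigma s t c (Suc m)) c (int (2 * t + u + c)))"
    by (simp only: sum.shift_bounds_cl_Suc_ivl)
  also have "\<dots> = (\<Sum>m=0..c - 1. (if m = 0 \<or> m = c - 1 then of_nat (u + t + 1) else of_nat (u + 1)) *
      (fact (t + (c - 1)) / fact t) * (fact (t + u + m) / fact (t + m) *
      (fact t / (fact (t + u + (c - 1)) * of_nat (2 * t + u + (c - 1) + 1)))))"
    by (intro sum.cong refl, subst pure_diagram_gor_sigma_last[OF assms(1)]) (use assms in \<open>auto simp: gor_weight_def\<close>)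
  also have "\<dots> = 1"
    using assms by (intro weighted_edge_sum) simp
  finally show ?thesis .
qed

lemma gor_row_middle_low:
  assumes "s = 2 * t + u" "0 < t" "1 \<le> i" "i < c"
  shows "(\<Sum>k=1..c - i. gor_weight t u c k * pure_diagram (gor_sigma s t c k) i j) =
    (if j = int (t + i) then of_nat (gor_a c t i) else 0)"
proof (cases "j = int (t + i)")
  case False
  have "pure_diagram (gor_sigma s t c k) i j = 0" if "k \<in> {1..c - i}" for k
    using that assms False by (intro pure_diagram_off_degree) (auto simp: gor_sigma_nth)
  then show ?thesis using False by simp
next
  case True
  define q where "q = c - i - 1"
  have "(\<Sum>k=1..c - i. gor_weight t u c k * pure_diagram (gor_sigma s t c k) i j) =
      (\<Sum>m=0..q. gor_weight t u c (c - i - m) * pure_diagram (gor_sigma s t c (c - i - m)) i (int (t + i)))"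
    unfolding True q_def by (rule sum_atLeast1_atMost_reflect) (use assms in simp)
  also have "\<dots> = (\<Sum>m=0..q. (if m = q then of_nat (u + t + 1) else of_nat (u + 1)) * (fact (t + c - 1) / fact t) *
      (fact (u + m) / fact m * (1 / (of_nat (t + i) * fact (i - 1) * fact (u + q) * of_nat (t + u + q + 1)))))"
    unfolding q_def
    by (intro sum.cong refl, subst pure_diagram_gor_sigma_low[OF assms(1,3)]) (use assms in \<open>auto simp: gor_weight_def\<close>)
  also have "\<dots> = fact (t + c - 1) / fact t / (of_nat (t + i) * fact (i - 1) * fact q)"
    by (rule weighted_run_sum)
  also have "\<dots> = of_nat (gor_a c t i)"
    using gor_a_eq[OF assms(3,4,2)] by (simp add: q_def)
  finally show ?thesis using True by simp
qed

lemma gor_row_middle_high: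
  assumes "s = 2 * t + u" "0 < t" "1 \<le> i" "i < c"
  shows "(\<Sum>k=Suc (c - i)..c. gor_weight t u c k * pure_diagram (gor_sigma s t c k) i j) =
    (if j = int (t + u + i) then of_nat (gor_a c t (c - i)) else 0)"
proof (cases "j = int (t + u + i)")
  case False
  have "pure_diagram (gor_sigma s t c k) i j = 0" if "k \<in> {Suc (c - i)..c}" for k
    using that assms False by (intro pure_diagram_off_degree) (auto simp: gor_sigma_nth)
  then show ?thesis using False by simp
next
  case True
  define q where "q = i - 1"
  have "{Suc (c - i)..c} = {0 + Suc (c - i)..q + Suc (c - i)}"
    using assms by (auto simp: q_def)
  then have "(\<Sum>k=Suc (c - i)..c. gor_weight t u c k * pure_diagram (gor_sigma s t c k) i j) =
      (\<Sum>m=0..q. gor_weight t u c (m + Suc (c - i)) * pure_diagram (gor_sigma s t c (m + Suc (c - i))) i (int (t + u + i)))"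
    unfolding True by (simp only: sum.shift_bounds_cl_nat_ivl)
  also have "\<dots> = (\<Sum>m=0..q. (if m = q then of_nat (u + t + 1) else of_nat (u + 1)) * (fact (t + c - 1) / fact t) *
      (fact (u + m) / fact m * (1 / (fact (c - i - 1) * of_nat (t + c - i) * fact (u + q) * of_nat (t + u + q + 1)))))"
    unfolding q_def
    by (intro sum.cong refl, subst pure_diagram_gor_sigma_high[OF assms(1)]) (use assms in \<open>auto simp: gor_weight_def\<close>)
  also have "\<dots> = fact (t + c - 1) / fact t / (fact (c - i - 1) * of_nat (t + c - i) * fact q)"
    by (rule weighted_run_sum)
  also have "\<dots> = of_nat (gor_a c t (c - i))"
    using gor_a_eq[of "c - i" c t] assms by (simp add: q_def ac_simps)
  finally show ?thesis using True by simp
qed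

text \<open>For \<open>s = 2t\<close> the two degrees of a middle row coincide and the ranks add up.\<close>

definition gor_betti :: "nat \<Rightarrow> nat \<Rightarrow> nat \<Rightarrow> nat \<Rightarrow> int \<Rightarrow> nat" where
  "gor_betti s t c i j =
     (if i = 0 then of_bool (j = 0)
      else if i = c then of_bool (j = int s + int c)
      else if i < c then (if j = int t + int i then gor_a c t i else 0)
                       + (if j = int s - int t + int i then gor_a c t (c - i) else 0)
      else 0)"

lemma gor_betti_decomposition:
  assumes "s = 2 * t + u" "0 < t" "2 \<le> c"
  shows "(\<Sum>k=1..c. gor_weight t u c k * pure_diagram (gor_sigma s t c k) i j) = of_nat (gor_betti s t c i j)"
proof -
  consider "i = 0" | "i = c" | "1 \<le> i" "i < c" | "c < i" by linarith
  then show ?thesis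
  proof cases
    case 1
    show ?thesis
    proof (cases "j = 0")
      case False
      then have "pure_diagram (gor_sigma s t c k) 0 j = 0" for k
        using assms by (intro pure_diagram_off_degree) (simp add: gor_sigma_nth)
      then show ?thesis using 1 False by (simp add: gor_betti_def)
    qed (use 1 assms gor_row_first in \<open>simp add: gor_betti_def\<close>)
  next
    case 2
    show ?thesis
    proof (cases "j = int s + int c")
      case True
      then show ?thesis using 2 assms gor_row_last[OF assms(1,3)] by (simp add: gor_betti_def)
    next
      case False
      then have "pure_diagram (gor_sigma s t c k) c j = 0" for k
        using assms by (intro pure_diagram_off_degree) (simp add: gor_sigma_nth)
      then show ?thesis using 2 False assms by (simp add: gor_betti_def)
    qed
  next
    case 3
    have "(\<Sum>k=1..c. gor_weight t u c k * pure_diagram (gor_sigma s t c k) i j) =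
        (\<Sum>k=1..c - i. gor_weight t u c k * pure_diagram (gor_sigma s t c k) i j) +
        (\<Sum>k=Suc (c - i)..c. gor_weight t u c k * pure_diagram (gor_sigma s t c k) i j)"
      using sum.ub_add_nat[of 1 "c - i" _ i] 3 by simp
    also have "\<dots> = (if j = int (t + i) then of_nat (gor_a c t i) else 0) +
        (if j = int (t + u + i) then of_nat (gor_a c t (c - i)) else 0)"
      by (simp only: gor_row_middle_low[OF assms(1,2) 3] gor_row_middle_high[OF assms(1,2) 3])
    finally show ?thesis
      using 3 assms by (simp add: gor_betti_def)
  next
    case 4
    then have "pure_diagram (gor_sigma s t c k) i j = 0" for k
      using assms by (intro pure_diagram_beyond_length) (simp add: length_gor_sigma)
    then show ?thesis using 4 by (simp add: gor_betti_def)
  qed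
qed

theorem theorem5p4:
  fixes n s t c :: nat
    and F :: "nat \<Rightarrow> int multiset"
    and \<beta> :: "nat \<Rightarrow> int \<Rightarrow> nat"
  assumes pos: "s > 0" "t > 0" "c > 0"
    and st: "s \<ge> 2 * t"
    and c2: "2 \<le> c" and cn: "c \<le> n"
    and F0: "F 0 = {#0#}"
    and Fc: "F c = {#int s + int c#}"
    and Fi: "\<And>i. 1 \<le> i \<Longrightarrow> i \<le> c - 1 \<Longrightarrow>
               F i = replicate_mset (gor_a c t i) (int t + int i)
                   + replicate_mset (gor_a c t (c - i)) (int s - int t + int i)"
    and Fbig: "\<And>i. i > c \<Longrightarrow> F i = {#}"
    and betti: "\<And>i j. \<beta> i j = count (F i) j"
  shows "(let a = of_int (int s + 1 - int t) * fact (t + c - 1) / (fact t :: rat);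
              b = of_int (int s + 1 - 2 * int t) * fact (t + c - 1) / (fact t :: rat)
          in a > 0 \<and> b > 0 \<and>
             (\<forall>i j. of_nat (\<beta> i j) =
                a * (pure_diagram (gor_sigma s t c 1) i j + pure_diagram (gor_sigma s t c c) i j)
              + b * (\<Sum>k = 2..c - 1. pure_diagram (gor_sigma s t c k) i j)))
         \<and> (\<forall>k. 1 \<le> k \<and> k < c \<longrightarrow> pd_le (gor_sigma s t c k) (gor_sigma s t c (k + 1)))
         \<and> (s > 2 * t \<longrightarrow> (\<forall>k. 1 \<le> k \<and> k < c \<longrightarrow> gor_sigma s t c k \<noteq> gor_sigma s t c (k + 1)))"
proof -
  obtain u where s: "s = 2 * t + u" using st le_Suc_ex by blast
  define K where "K = fact (t + c - 1) / (fact t :: rat)"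
  have a: "of_int (int s + 1 - int t) * fact (t + c - 1) / (fact t :: rat) = of_nat (u + t + 1) * K"
    and b: "of_int (int s + 1 - 2 * int t) * fact (t + c - 1) / (fact t :: rat) = of_nat (u + 1) * K"
    by (simp_all add: K_def s)
  have "\<beta> i j = gor_betti s t c i j" for i j
    using F0 Fc Fi Fbig c2 by (auto simp: betti gor_betti_def)
  then have "of_nat (\<beta> i j) =
      of_nat (u + t + 1) * K * (pure_diagram (gor_sigma s t c 1) i j + pure_diagram (gor_sigma s t c c) i j)
      + of_nat (u + 1) * K * (\<Sum>k = 2..c - 1. pure_diagram (gor_sigma s t c k) i j)" for i j
    using gor_betti_decomposition[OF s pos(2) c2, of i j] sum_gor_weight[OF c2] by (simp add: K_def)
  moreover have "0 < K" by (simp add: K_def)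
  ultimately show ?thesis
    unfolding Let_def a b
    using gor_sigma_chain[OF st] gor_sigma_strict by auto
qed

end
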